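(* Let $G_0$ be a locally compact totally disconnected group, and let $C,D\subset G_0$ be closed subgroups, each isomorphic (as topological groups) to $F^m$ for some $m$, in duality via a non-degenerate $F$-bilinear pairing $\langle\cdot,\cdot\rangle':C\times D\to F$. Let $\chi$ be a continuous character of $D$, and let $f$ be a function on $G_0$ right-invariant under some open compact subgroup such that $f(cd)=f(c)\chi(d)\psi(\langle c,d\rangle')$ for all $c\in C$, $d\in D$. Then $f|_C$ is compactly supported. Moreover, if $f$ is right-invariant under a fixed open compact subgroup $K_0$ and $\langle\cdot,\cdot\rangle'$ ranges over a compact set $\tilde\Omega$ of non-degenerate pairings, then the support of $f|_C$ is contained in a compact set depending only on $K_0$, $\tilde\Omega$ and the conductor of $\chi$.
   Context: $F$ is a $p$-adic field and $\psi$ a nontrivial continuous additive character of $F$. *)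

theory Defs
  imports "HOL-Analysis.Analysis" "HOL-Algebra.Group"
begin

definition totally_disconnected_space :: "'a topology \<Rightarrow> bool" where
  "totally_disconnected_space X \<longleftrightarrow> (\<forall>S. connectedin X S \<longrightarrow> (\<exists>a. S \<subseteq> {a}))"

(* A p-adic field (finite extension of Q_p), characterised as a non-discrete, Hausdorff,
   locally compact, totally disconnected topological field of characteristic 0. *)
definition p_adic_field :: "('f::{field,topological_space}) itself \<Rightarrow> bool" where
  "p_adic_field _ \<longleftrightarrow>
     continuous_on UNIV (\<lambda>p::'f \<times> 'f. fst p + snd p) \<and>
     continuous_on UNIV (\<lambda>p::'f \<times> 'f. fst p * snd p) \<and>
     continuous_on UNIV (\<lambda>x::'f. - x) \<and>
     continuous_on (UNIV - {0}) (\<lambda>x::'f. inverse x) \<and>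
     Hausdorff_space (euclidean :: 'f topology) \<and>
     locally_compact_space (euclidean :: 'f topology) \<and>
     totally_disconnected_space (euclidean :: 'f topology) \<and>
     \<not> open {0::'f} \<and>
     CHAR('f) = 0"

definition nontrivial_additive_character :: "('f::{field,topological_space} \<Rightarrow> complex) \<Rightarrow> bool" where
  "nontrivial_additive_character \<psi> \<longleftrightarrow>
     continuous_on UNIV \<psi> \<and> (\<forall>x y. \<psi> (x + y) = \<psi> x * \<psi> y) \<and>
     (\<forall>x. norm (\<psi> x) = 1) \<and> (\<exists>x. \<psi> x \<noteq> 1)"

definition lctd_group :: "('g, 'b) monoid_scheme \<Rightarrow> 'g topology \<Rightarrow> bool" where
  "lctd_group G X \<longleftrightarrow> group G \<and> topspace X = carrier G \<and>
     continuous_map (prod_topology X X) X (\<lambda>p. fst p \<otimes>\<^bsub>G\<^esub> snd p) \<and>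
     continuous_map X X (\<lambda>x. inv\<^bsub>G\<^esub> x) \<and>
     locally_compact_space X \<and> totally_disconnected_space X"

definition open_compact_subgroup :: "('g, 'b) monoid_scheme \<Rightarrow> 'g topology \<Rightarrow> 'g set \<Rightarrow> bool" where
  "open_compact_subgroup G X K \<longleftrightarrow> subgroup K G \<and> openin X K \<and> compactin X K"

definition top_group_iso_onto ::
  "('g, 'b) monoid_scheme \<Rightarrow> 'g topology \<Rightarrow> ('f::{field,topological_space}^'m::finite \<Rightarrow> 'g) \<Rightarrow> 'g set \<Rightarrow> bool" where
  "top_group_iso_onto G X \<phi> C \<longleftrightarrow>
     bij_betw \<phi> UNIV C \<and> (\<forall>x y. \<phi> (x + y) = \<phi> x \<otimes>\<^bsub>G\<^esub> \<phi> y) \<and>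
     homeomorphic_map euclidean (subtopology X C) \<phi>"

definition F_bilinear :: "('f::field^'m \<Rightarrow> 'f^'n \<Rightarrow> 'f) \<Rightarrow> bool" where
  "F_bilinear B \<longleftrightarrow>
     (\<forall>x x' y. B (x + x') y = B x y + B x' y) \<and>
     (\<forall>x y y'. B x (y + y') = B x y + B x y') \<and>
     (\<forall>a x y. B (a *s x) y = a * B x y) \<and>
     (\<forall>a x y. B x (a *s y) = a * B x y)"

definition nondegenerate_pairing :: "('a::zero \<Rightarrow> 'b::zero \<Rightarrow> 'f::zero) \<Rightarrow> bool" where
  "nondegenerate_pairing B \<longleftrightarrow>
     (\<forall>x. (\<forall>y. B x y = 0) \<longrightarrow> x = 0) \<and> (\<forall>y. (\<forall>x. B x y = 0) \<longrightarrow> y = 0)"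

definition pairing_of_matrix :: "'f::field^'m::finite^'m \<Rightarrow> 'f^'m \<Rightarrow> 'f^'m \<Rightarrow> 'f" where
  "pairing_of_matrix M x y = (\<Sum>i\<in>UNIV. \<Sum>j\<in>UNIV. x $ i * M $ i $ j * y $ j)"

definition continuous_character :: "('g, 'b) monoid_scheme \<Rightarrow> 'g topology \<Rightarrow> 'g set \<Rightarrow> ('g \<Rightarrow> complex) \<Rightarrow> bool" where
  "continuous_character G X D chi \<longleftrightarrow>
     (\<forall>d\<in>D. \<forall>d'\<in>D. chi (d \<otimes>\<^bsub>G\<^esub> d') = chi d * chi d') \<and> (\<forall>d\<in>D. norm (chi d) = 1) \<and>
     continuous_map (subtopology X D) euclidean chi"

definition right_invariant :: "('g, 'b) monoid_scheme \<Rightarrow> 'g set \<Rightarrow> ('g \<Rightarrow> 'c) \<Rightarrow> bool" where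
  "right_invariant G K f \<longleftrightarrow> (\<forall>g\<in>carrier G. \<forall>k\<in>K. f (g \<otimes>\<^bsub>G\<^esub> k) = f g)"

end

theory Submission
  imports Defs
begin

text \<open>
  For \<open>c = \<phi>C x\<close> and \<open>c0 = \<phi>C x0\<close> in the support of \<open>f\<close>, right invariance under \<open>K\<close> and the
  equivariance \<open>f (c d) = f c \<chi> d \<psi> \<langle>c, d\<rangle>\<close> force \<open>\<psi> \<langle>x - x0, y\<rangle> = 1\<close> for all \<open>y\<close> in the
  neighbourhood \<open>\<phi>D -` K\<close> of \<open>0\<close>; in the uniform statement \<open>\<chi>\<close> is trivial on \<open>U\<close>, which gives
  \<open>\<psi> \<langle>x, y\<rangle> = 1\<close> on \<open>\<phi>D -` (K0 \<inter> U)\<close> directly. The \<open>z\<close> for which \<open>\<psi> \<langle>z, -\<rangle>\<^sub>M\<close> is trivial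
  on a neighbourhood \<open>L\<close> of \<open>0\<close> form a bounded set, uniformly for \<open>M\<close> in a compact set of
  invertible Gram matrices: pairing \<open>z\<close> with the axis vectors in \<open>L\<close> puts each coordinate of
  \<open>M\<^sup>T z\<close> into the annihilator of a neighbourhood of \<open>0\<close> in \<open>F\<close>, which is bounded because inverses
  of elements away from \<open>0\<close> stay in a compact set, and Cramer's rule recovers \<open>z\<close> continuously
  from \<open>(M\<^sup>T, M\<^sup>T z)\<close>. As \<open>F\<close> is only given as a non-discrete locally compact Hausdorff field,
  that last fact is proved with a contracting element \<open>\<pi>\<close> of a compact neighbourhood of \<open>0\<close>,
  whose powers tend to \<open>0\<close> and which plays the role of a uniformiser.
\<close>

section \<open>Topology of the field\<close>

lemma p_adic_field_continuous_on_add: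
  assumes F: "p_adic_field TYPE('f::{field,topological_space})"
    and "continuous_on S f" "continuous_on S g"
  shows "continuous_on S (\<lambda>x. (f x :: 'f) + g x)"
proof -
  have op: "continuous_on UNIV (\<lambda>p::'f \<times> 'f. fst p + snd p)"
    using F by (simp add: p_adic_field_def)
  show ?thesis
    using continuous_on_compose2[OF op continuous_on_Pair[OF assms(2,3)]] by simp
qed

lemma p_adic_field_continuous_on_mult:
  assumes F: "p_adic_field TYPE('f::{field,topological_space})"
    and "continuous_on S f" "continuous_on S g"
  shows "continuous_on S (\<lambda>x. (f x :: 'f) * g x)"
proof -
  have op: "continuous_on UNIV (\<lambda>p::'f \<times> 'f. fst p * snd p)"
    using F by (simp add: p_adic_field_def)
  show ?thesis
    using continuous_on_compose2[OF op continuous_on_Pair[OF assms(2,3)]] by simp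
qed

lemma p_adic_field_continuous_on_inverse:
  assumes F: "p_adic_field TYPE('f::{field,topological_space})"
    and "continuous_on S f" "\<And>x. x \<in> S \<Longrightarrow> f x \<noteq> (0::'f)"
  shows "continuous_on S (\<lambda>x. inverse (f x))"
proof -
  have "continuous_on (UNIV - {0}) (\<lambda>x::'f. inverse x)"
    using F by (simp add: p_adic_field_def)
  then show ?thesis
    by (rule continuous_on_compose2[OF _ assms(2)]) (use assms(3) in auto)
qed

lemma p_adic_field_continuous_on_sum:
  assumes F: "p_adic_field TYPE('f::{field,topological_space})"
    and "finite I" "\<And>i. i \<in> I \<Longrightarrow> continuous_on S (f i)"
  shows "continuous_on S (\<lambda>x. \<Sum>i\<in>I. (f i x :: 'f))"
  using assms(2,3)
  by (induction I rule: finite_induct) (simp_all add: p_adic_field_continuous_on_add[OF F])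

lemma p_adic_field_continuous_on_prod:
  assumes F: "p_adic_field TYPE('f::{field,topological_space})"
    and "finite I" "\<And>i. i \<in> I \<Longrightarrow> continuous_on S (f i)"
  shows "continuous_on S (\<lambda>x. \<Prod>i\<in>I. (f i x :: 'f))"
  using assms(2,3)
  by (induction I rule: finite_induct) (simp_all add: p_adic_field_continuous_on_mult[OF F])

lemma p_adic_field_open_vimage_mult:
  assumes F: "p_adic_field TYPE('f::{field,topological_space})" and "open (U::'f set)"
  shows "open ((\<lambda>x. x * a) -` U)"
  using continuous_on_open_vimage[of UNIV "\<lambda>x. x * a"] assms
    p_adic_field_continuous_on_mult[OF F continuous_on_id continuous_on_const]
  by simp

lemma p_adic_field_compact_imp_closed:
  assumes F: "p_adic_field TYPE('f::{field,topological_space})" and "compact (N::'f set)"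
  shows "closed N"
  using F assms(2) compactin_imp_closedin[of "euclidean::'f topology" N]
  by (simp add: p_adic_field_def)

lemma p_adic_field_closed_singleton:
  assumes F: "p_adic_field TYPE('f::{field,topological_space})"
  shows "closed {a::'f}"
  by (rule p_adic_field_compact_imp_closed[OF F compact_sing])

lemma p_adic_field_separate_points:
  assumes F: "p_adic_field TYPE('f::{field,topological_space})" and "(x::'f) \<noteq> y"
  obtains U V where "open U" "open V" "x \<in> U" "y \<in> V" "U \<inter> V = {}"
  using F assms(2) unfolding p_adic_field_def Hausdorff_space_def disjnt_def by force

lemma isolating_neighbourhood_of_powers:
  fixes \<pi> y :: "'f::{field,topological_space}"
  assumes F: "p_adic_field TYPE('f)"
    and N: "closed N" "1 \<notin> N" "\<And>k. \<pi> ^ Suc k \<in> N" and "\<pi> \<noteq> 0" "y \<noteq> 0"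
  obtains P where "open P" "y \<in> P" "finite {k. \<pi> ^ k \<in> P}"
proof -
  let ?T = "(- {0::'f}) \<times> (- {0::'f})"
  let ?quot = "\<lambda>p::'f \<times> 'f. fst p * inverse (snd p)"
  have "continuous_on ?T (\<lambda>p. inverse (snd p))"
    by (rule p_adic_field_continuous_on_inverse[OF F continuous_on_snd[OF continuous_on_id]]) auto
  then have "continuous_on ?T ?quot"
    by (rule p_adic_field_continuous_on_mult[OF F continuous_on_fst[OF continuous_on_id]])
  moreover have "open ?T"
    using p_adic_field_closed_singleton[OF F] by (intro open_Times) auto
  ultimately have "open (?quot -` (- N) \<inter> ?T)"
    using N(1) continuous_on_open_vimage[of ?T ?quot] by auto
  moreover have "(y, y) \<in> ?quot -` (- N) \<inter> ?T"
    using \<open>y \<noteq> 0\<close> N(2) by simp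
  ultimately obtain A B
    where AB: "open A" "open B" "(y, y) \<in> A \<times> B" "A \<times> B \<subseteq> ?quot -` (- N) \<inter> ?T"
    by (auto elim!: open_prod_elim)
  \<comment> \<open>two powers in \<open>A \<inter> B\<close> would have a quotient that is a power in \<open>N\<close>\<close>
  have no_smaller_power: False if "\<pi> ^ i \<in> A \<inter> B" "\<pi> ^ j \<in> A \<inter> B" "j < i" for i j
  proof -
    have "(\<pi> ^ i, \<pi> ^ j) \<in> A \<times> B"
      using that(1,2) by simp
    then have "\<pi> ^ i * inverse (\<pi> ^ j) \<notin> N"
      using AB(4) by auto
    moreover have "\<pi> ^ i * inverse (\<pi> ^ j) = \<pi> ^ Suc (i - j - 1)"
    proof -
      have "i = j + Suc (i - j - 1)"
        using that(3) by simp
      then have "\<pi> ^ i = \<pi> ^ j * \<pi> ^ Suc (i - j - 1)"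
        by (metis power_add)
      then show ?thesis
        using \<open>\<pi> \<noteq> 0\<close> by simp
    qed
    ultimately show False
      using N(3) by simp
  qed
  have "{k. \<pi> ^ k \<in> A \<inter> B} \<subseteq> {LEAST k. \<pi> ^ k \<in> A \<inter> B}"
  proof
    fix k assume "k \<in> {k. \<pi> ^ k \<in> A \<inter> B}"
    then have k: "\<pi> ^ k \<in> A \<inter> B"
      by simp
    let ?k0 = "LEAST k. \<pi> ^ k \<in> A \<inter> B"
    have "\<pi> ^ ?k0 \<in> A \<inter> B" "?k0 \<le> k"
      using k by (rule LeastI, rule Least_le)
    then show "k \<in> {?k0}"
      using no_smaller_power[OF k] by (auto simp: le_less)
  qed
  then have "finite {k. \<pi> ^ k \<in> A \<inter> B}"
    by (rule finite_subset) simp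
  moreover have "open (A \<inter> B)" "y \<in> A \<inter> B"
    using AB(1-3) by auto
  ultimately show ?thesis
    using that by blast
qed

lemma powers_tendsto_zero:
  fixes \<pi> :: "'f::{field,topological_space}"
  assumes F: "p_adic_field TYPE('f)"
    and N: "compact N" "1 \<notin> N" "\<And>k. \<pi> ^ Suc k \<in> N" and "\<pi> \<noteq> 0"
  shows "(\<lambda>k. \<pi> ^ k) \<longlonglongrightarrow> 0"
proof (rule topological_tendstoI)
  fix U :: "'f set" assume U: "open U" "0 \<in> U"
  have "closed N"
    using p_adic_field_compact_imp_closed[OF F N(1)] .
  have "\<exists>P. open P \<and> y \<in> P \<and> finite {k. \<pi> ^ k \<in> P}" if "y \<noteq> 0" for y
    by (rule isolating_neighbourhood_of_powers[OF F \<open>closed N\<close> N(2,3) \<open>\<pi> \<noteq> 0\<close> that]) blast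
  then obtain P where P: "\<And>y. y \<noteq> 0 \<Longrightarrow> open (P y) \<and> y \<in> P y \<and> finite {k. \<pi> ^ k \<in> P y}"
    by metis
  have P_outside: "open (P y)" "y \<in> P y" "finite {k. \<pi> ^ k \<in> P y}" if "y \<in> N - U" for y
  proof -
    have "y \<noteq> 0"
      using that U(2) by auto
    then show "open (P y)" "y \<in> P y" "finite {k. \<pi> ^ k \<in> P y}"
      using P by auto
  qed
  have "compact (N - U)"
    using N(1) U(1) by (simp add: compact_diff)
  moreover have "N - U \<subseteq> (\<Union>y\<in>N - U. P y)"
    using P_outside(2) by blast
  ultimately obtain Y where Y: "Y \<subseteq> N - U" "finite Y" "N - U \<subseteq> (\<Union>y\<in>Y. P y)"
    using compactE_image[of "N - U" "N - U" P] P_outside(1) by metis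
  have "{k. \<pi> ^ k \<notin> U} \<subseteq> insert 0 (\<Union>y\<in>Y. {k. \<pi> ^ k \<in> P y})"
  proof
    fix k assume k: "k \<in> {k. \<pi> ^ k \<notin> U}"
    show "k \<in> insert 0 (\<Union>y\<in>Y. {k. \<pi> ^ k \<in> P y})"
    proof (cases k)
      case (Suc j)
      then have "\<pi> ^ k \<in> N - U"
        using k N(3) by simp
      then show ?thesis
        using Y(3) by auto
    qed simp
  qed
  moreover have "finite (\<Union>y\<in>Y. {k. \<pi> ^ k \<in> P y})"
    using Y(1,2) P_outside(3) by auto
  ultimately have "finite {k. \<not> \<pi> ^ k \<in> U}"
    by (simp add: finite_subset)
  then show "\<forall>\<^sub>F k in sequentially. \<pi> ^ k \<in> U"
    by (simp add: eventually_cofinite flip: cofinite_eq_sequentially)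
qed

lemma p_adic_field_contracting_element:
  assumes F: "p_adic_field TYPE('f)"
  obtains N U :: "'f::{field,topological_space} set" and \<pi> :: 'f
  where "compact N" "open U" "0 \<in> U" "U \<subseteq> N" "1 \<notin> N"
    and "\<pi> \<noteq> 0" "\<pi> \<in> U" "\<And>x. x \<in> N \<Longrightarrow> \<pi> * x \<in> U"
proof -
  have "locally_compact_space (euclidean :: 'f topology)"
    using F by (simp add: p_adic_field_def)
  then have "\<exists>V K. open V \<and> compact K \<and> (0::'f) \<in> V \<and> V \<subseteq> K"
    unfolding locally_compact_space_def by simp
  then obtain V K :: "'f set" where VK: "open V" "compact K" "0 \<in> V" "V \<subseteq> K"
    by blast
  obtain A B :: "'f set" where AB: "open A" "open B" "0 \<in> A" "1 \<in> B" "A \<inter> B = {}"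
    using p_adic_field_separate_points[OF F zero_neq_one] .
  define N where "N = K - B"
  define U where "U = V \<inter> A"
  have N: "compact N" "1 \<notin> N"
    unfolding N_def using VK(2) AB(2,4) by (auto intro: compact_diff)
  have U: "open U" "0 \<in> U" "U \<subseteq> N"
    unfolding U_def N_def using VK AB by auto
  have "continuous_on UNIV (\<lambda>p::'f \<times> 'f. fst p * snd p)"
    using F by (simp add: p_adic_field_def)
  then have "open ((\<lambda>p::'f \<times> 'f. fst p * snd p) -` U)"
    using U(1) open_vimage by blast
  moreover have "{0} \<times> N \<subseteq> (\<lambda>p. fst p * snd p) -` U"
    using U(2) by auto
  ultimately have "\<exists>T. 0 \<in> T \<and> open T \<and> T \<times> N \<subseteq> (\<lambda>p. fst p * snd p) -` U"
    by (rule Elementary_Topology.tube_lemma[OF N(1)])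
  then obtain T where T: "0 \<in> T" "open T" "T \<times> N \<subseteq> (\<lambda>p. fst p * snd p) -` U"
    by blast
  have "T \<inter> U \<noteq> {0}"
  proof
    assume "T \<inter> U = {0}"
    then have "open {0::'f}"
      using open_Int[OF T(2) U(1)] by simp
    then show False
      using F by (simp add: p_adic_field_def)
  qed
  then obtain \<pi> where \<pi>: "\<pi> \<in> T" "\<pi> \<in> U" "\<pi> \<noteq> 0"
    using T(1) U(2) by blast
  have "\<pi> * x \<in> U" if "x \<in> N" for x
    using T(3) \<pi>(1) that by auto
  then show ?thesis
    by (rule that[OF N(1) U(1-3) N(2) \<pi>(3,2)])
qed

lemma contracting_element_powers:
  fixes \<pi> :: "'a::monoid_mult"
  assumes "U \<subseteq> N" "\<pi> \<in> U" "\<And>x. x \<in> N \<Longrightarrow> \<pi> * x \<in> U"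
  shows "\<pi> ^ Suc k \<in> N"
  using assms by (induction k) auto

lemma contracting_element_shift:
  fixes \<pi> c :: "'f::{field,topological_space}"
  assumes F: "p_adic_field TYPE('f)"
    and N: "compact N" "1 \<notin> N" and U: "open U" "0 \<in> U" "U \<subseteq> N"
    and \<pi>: "\<pi> \<noteq> 0" "\<pi> \<in> U" "\<And>x. x \<in> N \<Longrightarrow> \<pi> * x \<in> U" and "c \<notin> N"
  obtains k where "\<pi> ^ k \<in> N" "\<pi> ^ k * c \<in> N - (\<lambda>x. x * inverse \<pi>) -` U"
proof -
  have "(\<lambda>k. \<pi> ^ k) \<longlonglongrightarrow> 0"
    using powers_tendsto_zero[OF F N contracting_element_powers[OF U(3) \<pi>(2,3)] \<pi>(1)] .
  moreover have "0 \<in> (\<lambda>x. x * c) -` U"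
    using U(2) by simp
  ultimately have "\<forall>\<^sub>F k in sequentially. \<pi> ^ k \<in> (\<lambda>x. x * c) -` U"
    using topological_tendstoD p_adic_field_open_vimage_mult[OF F U(1)] by blast
  then have "\<exists>k. \<pi> ^ k * c \<in> U"
    unfolding eventually_sequentially by auto
  define k where "k = (LEAST k. \<pi> ^ k * c \<in> U)"
  have k: "\<pi> ^ k * c \<in> U"
    unfolding k_def using \<open>\<exists>k. \<pi> ^ k * c \<in> U\<close> by (rule LeastI_ex)
  have "k \<noteq> 0"
  proof
    assume "k = 0"
    then have "c \<in> U"
      using k by simp
    then show False
      using \<open>c \<notin> N\<close> U(3) by blast
  qed
  then obtain j where j: "k = Suc j"
    using not0_implies_Suc by blast
  have "\<pi> ^ j * c \<notin> U"
    using Least_le[of "\<lambda>k. \<pi> ^ k * c \<in> U" j] j unfolding k_def by auto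
  moreover have "(\<pi> ^ k * c) * inverse \<pi> = \<pi> ^ j * c"
    using \<pi>(1) j by (simp add: field_simps)
  ultimately have "\<pi> ^ k * c \<in> N - (\<lambda>x. x * inverse \<pi>) -` U"
    using k U(3) by (metis DiffI subsetD vimageE)
  moreover have "\<pi> ^ k \<in> N"
    using contracting_element_powers[OF U(3) \<pi>(2,3)] j by simp
  ultimately show ?thesis
    using that by blast
qed

lemma p_adic_field_inverse_bounded_outside_neighbourhood:
  fixes W :: "'f::{field,topological_space} set"
  assumes F: "p_adic_field TYPE('f)" and W: "open W" "0 \<in> W"
  obtains Q where "compact Q" "\<And>c. c \<notin> W \<Longrightarrow> inverse c \<in> Q"
proof -
  obtain N U :: "'f set" and \<pi> :: 'f
    where N: "compact N" and U: "open U" "0 \<in> U" "U \<subseteq> N" and "1 \<notin> N"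
      and \<pi>: "\<pi> \<noteq> 0" "\<pi> \<in> U" "\<And>x. x \<in> N \<Longrightarrow> \<pi> * x \<in> U"
    using p_adic_field_contracting_element[OF F] by blast
  \<comment> \<open>\<open>c \<notin> N\<close> is \<open>\<pi>\<^sup>-\<^sup>k d\<close> with \<open>d\<close> in the compact shell \<open>D\<close>, which avoids \<open>0\<close>\<close>
  define D where "D = N - (\<lambda>x. x * inverse \<pi>) -` U"
  have D: "compact D" "0 \<notin> D"
    unfolding D_def using N U(1,2) p_adic_field_open_vimage_mult[OF F]
    by (auto intro: compact_diff)
  have "continuous_on D inverse"
    using D(2) by (intro p_adic_field_continuous_on_inverse[OF F continuous_on_id]) auto
  then have "compact (N \<times> inverse ` D)"
    using N D(1) by (intro compact_Times compact_continuous_image)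
  then have near: "compact ((\<lambda>p. fst p * snd p) ` (N \<times> inverse ` D))"
    by (rule compact_continuous_image[rotated]) (intro p_adic_field_continuous_on_mult[OF F]
        continuous_on_fst continuous_on_snd continuous_on_id)
  have far: "compact (inverse ` (N - W))"
    using N W by (intro compact_continuous_image compact_diff
        p_adic_field_continuous_on_inverse[OF F continuous_on_id]) auto
  have "inverse c \<in> (\<lambda>p. fst p * snd p) ` (N \<times> inverse ` D)" if c: "c \<notin> N" for c
  proof -
    obtain k where "\<pi> ^ k \<in> N" "\<pi> ^ k * c \<in> D"
      unfolding D_def using contracting_element_shift[OF F N \<open>1 \<notin> N\<close> U \<pi> c] .
    then have "(\<pi> ^ k, inverse (\<pi> ^ k * c)) \<in> N \<times> inverse ` D"
      by blast
    moreover have "inverse c = (\<lambda>p. fst p * snd p) (\<pi> ^ k, inverse (\<pi> ^ k * c))"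
      using \<pi>(1) by (simp add: inverse_mult_distrib mult.assoc[symmetric])
    ultimately show ?thesis
      by (rule rev_image_eqI)
  qed
  then have "inverse c \<in> (\<lambda>p. fst p * snd p) ` (N \<times> inverse ` D) \<union> inverse ` (N - W)"
    if "c \<notin> W" for c
    using that by (cases "c \<in> N") auto
  then show ?thesis
    using that compact_Un[OF near far] by blast
qed

section \<open>Annihilators of neighbourhoods of zero\<close>

lemma additive_character_annihilator_bounded:
  fixes V :: "'f::{field,topological_space} set"
  assumes F: "p_adic_field TYPE('f)" and \<psi>: "nontrivial_additive_character \<psi>"
    and V: "open V" "0 \<in> V"
  obtains Q where "compact Q" "\<And>b. (\<forall>a\<in>V. \<psi> (b * a) = 1) \<Longrightarrow> b \<in> Q"
proof -
  obtain t where t: "\<psi> t \<noteq> 1"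
    using \<psi> unfolding nontrivial_additive_character_def by blast
  obtain Q where Q: "compact Q" "\<And>c. c \<notin> (\<lambda>s. s * t) -` V \<Longrightarrow> inverse c \<in> Q"
    using p_adic_field_inverse_bounded_outside_neighbourhood[OF F
        p_adic_field_open_vimage_mult[OF F V(1)]] V(2) by auto
  \<comment> \<open>if \<open>b \<noteq> 0\<close> annihilates \<open>V\<close> then \<open>t \<notin> b V\<close>, i.e. \<open>inverse b\<close> lies outside \<open>V / t\<close>\<close>
  have "b \<in> insert 0 Q" if b: "\<forall>a\<in>V. \<psi> (b * a) = 1" for b
  proof (cases "b = 0")
    case False
    have "inverse b \<notin> (\<lambda>s. s * t) -` V"
    proof
      assume "inverse b \<in> (\<lambda>s. s * t) -` V"
      then have "\<psi> (b * (inverse b * t)) = 1"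
        using b by simp
      moreover have "b * (inverse b * t) = t"
        using False by (simp add: mult.assoc[symmetric])
      ultimately show False
        using t by simp
    qed
    then show ?thesis
      using Q(2) by fastforce
  qed simp
  then show ?thesis
    using that compact_insert[OF Q(1)] by blast
qed

lemma compact_vec_componentwise:
  fixes Q :: "'a::topological_space set"
  assumes "compact Q"
  shows "compact {x::'a^'n::finite. \<forall>i. x $ i \<in> Q}"
proof -
  let ?cube = "PiE (UNIV::'n set) (\<lambda>_. Q)"
  have "compactin (product_topology (\<lambda>_. euclidean) UNIV) ?cube"
    using assms by (simp add: compactin_PiE)
  then have cube: "compact ?cube"
    by (simp add: euclidean_product_topology)
  have "continuous_on ?cube (vec_lambda :: ('n \<Rightarrow> 'a) \<Rightarrow> 'a^'n)"
    by (rule continuous_on_vec_lambda)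
      (rule continuous_on_subset[OF continuous_on_product_coordinates subset_UNIV])
  then have "compact (vec_lambda ` ?cube :: ('a^'n) set)"
    using cube by (rule compact_continuous_image)
  moreover have "{x::'a^'n. \<forall>i. x $ i \<in> Q} = vec_lambda ` ?cube"
  proof (intro equalityI subsetI)
    fix x :: "'a^'n" assume "x \<in> {x. \<forall>i. x $ i \<in> Q}"
    then show "x \<in> vec_lambda ` ?cube"
      by (intro image_eqI[of _ _ "vec_nth x"]) (auto simp: PiE_iff)
  qed (auto simp: PiE_iff)
  ultimately show ?thesis
    by simp
qed

lemma open_vec_axis_neighbourhood:
  fixes L :: "('a::{zero,topological_space}^'n::finite) set"
  assumes "open L" "0 \<in> L"
  obtains V where "open V" "0 \<in> V" "\<And>i a. a \<in> V \<Longrightarrow> axis i a \<in> L"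
proof -
  obtain A where A: "\<forall>i. open (A i) \<and> (0::'a^'n) $ i \<in> A i" "\<forall>y. (\<forall>i. y $ i \<in> A i) \<longrightarrow> y \<in> L"
    using assms unfolding open_vec_def by blast
  have "open (\<Inter>i. A i)" "0 \<in> (\<Inter>i. A i)"
    using A(1) by auto
  moreover have "axis i a \<in> L" if "a \<in> (\<Inter>i. A i)" for i a
    using A that by (simp add: axis_def)
  ultimately show ?thesis
    by (rule that)
qed

lemma continuous_on_transpose:
  "continuous_on S (transpose :: 'a::topological_space^'n::finite^'m::finite \<Rightarrow> 'a^'m^'n)"
  unfolding transpose_def
  by (intro continuous_on_vec_lambda continuous_on_component continuous_on_id)

lemma p_adic_field_continuous_on_det:
  assumes F: "p_adic_field TYPE('f::{field,topological_space})"
    and "\<And>i j. continuous_on S (\<lambda>x. (A x :: 'f^'n::finite^'n) $ i $ j)"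
  shows "continuous_on S (\<lambda>x. det (A x))"
  unfolding det_def
  by (intro p_adic_field_continuous_on_sum[OF F] p_adic_field_continuous_on_mult[OF F]
      p_adic_field_continuous_on_prod[OF F] continuous_on_const assms(2) finite_permutations finite)

lemma p_adic_field_continuous_on_translation:
  assumes F: "p_adic_field TYPE('f::{field,topological_space})"
  shows "continuous_on S (\<lambda>z::'f^'n::finite. a + z)"
proof -
  have "(\<lambda>z::'f^'n. a + z) = (\<lambda>z. \<chi> i. a $ i + z $ i)"
    by (rule ext) (simp add: vec_eq_iff)
  then show ?thesis
    by (simp only:) (intro continuous_on_vec_lambda p_adic_field_continuous_on_add[OF F]
        continuous_on_const continuous_on_component continuous_on_id)
qed

definition cramer_solution :: "'a::field^'n^'n \<Rightarrow> 'a^'n \<Rightarrow> 'a^'n" where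
  "cramer_solution A b = (\<chi> k. det (\<chi> i j. if j = k then b $ i else A $ i $ j) / det A)"

lemma cramer_solution_matrix_vector_mult:
  fixes A :: "'a::field^'n::finite^'n"
  assumes "det A \<noteq> 0"
  shows "cramer_solution A (A *v x) = x"
  using cramer[OF assms, of x "A *v x"] unfolding cramer_solution_def by simp

lemma p_adic_field_continuous_on_cramer_solution:
  assumes F: "p_adic_field TYPE('f::{field,topological_space})"
  shows "continuous_on ({A :: 'f^'n::finite^'n. det A \<noteq> 0} \<times> UNIV)
           (\<lambda>p. cramer_solution (fst p) (snd p))"
proof -
  let ?S = "{A :: 'f^'n^'n. det A \<noteq> 0} \<times> (UNIV :: ('f^'n) set)"
  have entry: "continuous_on ?S (\<lambda>p. fst p $ i $ j)" for i j
    by (intro continuous_on_component continuous_on_fst continuous_on_id)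
  have "continuous_on ?S (\<lambda>p. (\<chi> i j. if j = k then snd p $ i else fst p $ i $ j) $ i $ j)"
    for i j k
    using entry by (cases "j = k") (simp_all add: continuous_on_component continuous_on_snd)
  then have "continuous_on ?S (\<lambda>p. det (\<chi> i j. if j = k then snd p $ i else fst p $ i $ j))" for k
    by (rule p_adic_field_continuous_on_det[OF F])
  moreover have "continuous_on ?S (\<lambda>p. inverse (det (fst p)))"
    using entry by (intro p_adic_field_continuous_on_inverse[OF F] p_adic_field_continuous_on_det[OF F])
      auto
  ultimately show ?thesis
    unfolding cramer_solution_def divide_inverse
    by (intro continuous_on_vec_lambda p_adic_field_continuous_on_mult[OF F])
qed

lemma pairing_of_matrix_eq_sum_transpose:
  fixes M :: "'a::field^'n::finite^'n"
  shows "pairing_of_matrix M x y = (\<Sum>j\<in>UNIV. (transpose M *v x) $ j * y $ j)"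
proof -
  have "pairing_of_matrix M x y = (\<Sum>j\<in>UNIV. \<Sum>i\<in>UNIV. x $ i * M $ i $ j * y $ j)"
    unfolding pairing_of_matrix_def by (rule sum.swap)
  also have "\<dots> = (\<Sum>j\<in>UNIV. (\<Sum>i\<in>UNIV. M $ i $ j * x $ i) * y $ j)"
    by (rule sum.cong[OF refl]) (subst sum_distrib_right, simp add: mult_ac)
  finally show ?thesis
    by (simp add: matrix_vector_mult_def transpose_def)
qed

lemma pairing_of_matrix_axis:
  fixes M :: "'a::field^'n::finite^'n"
  shows "pairing_of_matrix M x (axis j a) = (transpose M *v x) $ j * a"
  unfolding pairing_of_matrix_eq_sum_transpose axis_def
  by (simp add: if_distrib cong: if_cong)

lemma p_adic_field_compact_cramer_solutions:
  fixes \<Omega> :: "('f::{field,topological_space}^'n::finite^'n) set"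
  assumes F: "p_adic_field TYPE('f)"
    and \<Omega>: "compact \<Omega>" "\<And>A. A \<in> \<Omega> \<Longrightarrow> det A \<noteq> 0" and "compact W"
  shows "compact ((\<lambda>p. cramer_solution (fst p) (snd p)) ` (\<Omega> \<times> W))"
proof (rule compact_continuous_image)
  have "\<Omega> \<times> W \<subseteq> {A. det A \<noteq> 0} \<times> UNIV"
    using \<Omega>(2) by auto
  then show "continuous_on (\<Omega> \<times> W) (\<lambda>p. cramer_solution (fst p) (snd p))"
    by (rule continuous_on_subset[OF p_adic_field_continuous_on_cramer_solution[OF F]])
  show "compact (\<Omega> \<times> W)"
    using \<Omega>(1) \<open>compact W\<close> by (rule compact_Times)
qed

lemma pairing_annihilator_bounded:
  fixes L :: "('f::{field,topological_space}^'n::finite) set" and \<Omega> :: "('f^'n^'n) set"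
  assumes F: "p_adic_field TYPE('f)" and \<psi>: "nontrivial_additive_character \<psi>"
    and L: "open L" "0 \<in> L" and \<Omega>: "compact \<Omega>" "\<And>M. M \<in> \<Omega> \<Longrightarrow> det M \<noteq> 0"
  obtains Z where "compact Z"
    "\<And>M z. M \<in> \<Omega> \<Longrightarrow> (\<forall>y\<in>L. \<psi> (pairing_of_matrix M z y) = 1) \<Longrightarrow> z \<in> Z"
proof -
  obtain V where V: "open V" "0 \<in> V" "\<And>j a. a \<in> V \<Longrightarrow> axis j a \<in> L"
    using open_vec_axis_neighbourhood[OF L] by blast
  obtain Q where Q: "compact Q" "\<And>b. (\<forall>a\<in>V. \<psi> (b * a) = 1) \<Longrightarrow> b \<in> Q"
    using additive_character_annihilator_bounded[OF F \<psi> V(1,2)] by blast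
  define Box where "Box = {w::'f^'n. \<forall>j. w $ j \<in> Q}"
  define Z where "Z = (\<lambda>p. cramer_solution (fst p) (snd p)) ` (transpose ` \<Omega> \<times> Box)"
  have "compact (transpose ` \<Omega>)"
    using \<Omega>(1) by (rule compact_continuous_image[OF continuous_on_transpose])
  moreover have "det A \<noteq> 0" if "A \<in> transpose ` \<Omega>" for A
    using that \<Omega>(2) by (auto simp: det_transpose)
  moreover have "compact Box"
    unfolding Box_def using Q(1) by (rule compact_vec_componentwise)
  ultimately have "compact Z"
    unfolding Z_def by (rule p_adic_field_compact_cramer_solutions[OF F])
  moreover have "z \<in> Z" if M: "M \<in> \<Omega>" and z: "\<forall>y\<in>L. \<psi> (pairing_of_matrix M z y) = 1" for M z
  proof -
    have "(transpose M *v z) $ j \<in> Q" for j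
    proof (rule Q(2), rule ballI)
      fix a assume "a \<in> V"
      then have "\<psi> (pairing_of_matrix M z (axis j a)) = 1"
        using z V(3) by blast
      then show "\<psi> ((transpose M *v z) $ j * a) = 1"
        by (simp only: pairing_of_matrix_axis)
    qed
    then have "(transpose M, transpose M *v z) \<in> transpose ` \<Omega> \<times> Box"
      unfolding Box_def using M by blast
    then have "cramer_solution (transpose M) (transpose M *v z) \<in> Z"
      unfolding Z_def by (rule rev_image_eqI) simp
    moreover have "det (transpose M) \<noteq> 0"
      using \<Omega>(2)[OF M] by (simp add: det_transpose)
    ultimately show ?thesis
      using cramer_solution_matrix_vector_mult by metis
  qed
  ultimately show ?thesis
    by (rule that)
qed

section \<open>Bilinear pairings and Gram matrices\<close>

lemma F_bilinear_zero:
  assumes "F_bilinear B"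
  shows "B 0 y = 0" "B x 0 = 0"
  using assms unfolding F_bilinear_def by (metis vector_smult_lzero mult_zero_left)+

lemma F_bilinear_sum:
  assumes "F_bilinear B" "finite I"
  shows "B (\<Sum>i\<in>I. f i) y = (\<Sum>i\<in>I. B (f i) y)" "B x (\<Sum>i\<in>I. g i) = (\<Sum>i\<in>I. B x (g i))"
  using assms(2)
  by (induction I rule: finite_induct)
    (simp_all add: F_bilinear_zero[OF assms(1)] assms(1)[unfolded F_bilinear_def])

lemma F_bilinear_eq_pairing_of_matrix:
  fixes B :: "'a::field^'n::finite \<Rightarrow> 'a^'n \<Rightarrow> 'a"
  assumes B: "F_bilinear B"
  shows "B = pairing_of_matrix (\<chi> i j. B (axis i 1) (axis j 1))"
proof (intro ext)
  fix x y :: "'a^'n"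
  have scale: "B (a *s x) y = a * B x y" "B x (a *s y) = a * B x y" for a x y
    using B unfolding F_bilinear_def by blast+
  have "B x y = B (\<Sum>i\<in>UNIV. x $ i *s axis i 1) (\<Sum>j\<in>UNIV. y $ j *s axis j 1)"
    by (simp only: basis_expansion)
  also have "\<dots> = (\<Sum>j\<in>UNIV. y $ j * (\<Sum>i\<in>UNIV. x $ i * B (axis i 1) (axis j 1)))"
    by (simp only: F_bilinear_sum[OF B finite] scale)
  also have "\<dots> = (\<Sum>j\<in>UNIV. \<Sum>i\<in>UNIV. y $ j * (x $ i * B (axis i 1) (axis j 1)))"
    by (simp only: sum_distrib_left)
  also have "\<dots> = (\<Sum>i\<in>UNIV. \<Sum>j\<in>UNIV. y $ j * (x $ i * B (axis i 1) (axis j 1)))"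
    by (rule sum.swap)
  also have "\<dots> = pairing_of_matrix (\<chi> i j. B (axis i 1) (axis j 1)) x y"
    unfolding pairing_of_matrix_def by (simp add: mult_ac)
  finally show "B x y = pairing_of_matrix (\<chi> i j. B (axis i 1) (axis j 1)) x y" .
qed

lemma nondegenerate_pairing_of_matrix_imp_det_nonzero:
  fixes M :: "'a::field^'n::finite^'n"
  assumes "nondegenerate_pairing (pairing_of_matrix M)"
  shows "det M \<noteq> 0"
proof -
  have "z = 0" if "transpose M *v z = 0" for z
    using assms that unfolding nondegenerate_pairing_def pairing_of_matrix_eq_sum_transpose by simp
  then have "invertible (transpose M)"
    by (simp add: invertible_left_inverse matrix_left_invertible_ker)
  then show ?thesis
    by (simp add: invertible_det_nz det_transpose)
qed

lemma nontrivial_additive_character_add: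
  "nontrivial_additive_character \<psi> \<Longrightarrow> \<psi> (x + y) = \<psi> x * \<psi> y"
  unfolding nontrivial_additive_character_def by blast

lemma additive_character_bilinear_diff_eq_one:
  assumes \<psi>: "nontrivial_additive_character \<psi>" and B: "F_bilinear B"
    and "a * \<psi> (B x y) = 1" "a * \<psi> (B x0 y) = 1"
  shows "\<psi> (B (x - x0) y) = 1"
proof -
  have "B x y = B x0 y + B (x - x0) y"
    using B unfolding F_bilinear_def by (metis add.commute diff_add_cancel)
  then have "a * \<psi> (B x y) = (a * \<psi> (B x0 y)) * \<psi> (B (x - x0) y)"
    using nontrivial_additive_character_add[OF \<psi>] by (simp add: mult.assoc)
  then show ?thesis
    using assms(3,4) by simp
qed

section \<open>Supports of equivariant functions\<close>

lemma top_group_iso_onto_range: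
  "top_group_iso_onto G X \<phi> C \<Longrightarrow> range \<phi> = C"
  unfolding top_group_iso_onto_def bij_betw_def by blast

lemma top_group_iso_onto_zero:
  assumes "group G" "C \<subseteq> carrier G" "top_group_iso_onto G X \<phi> C"
  shows "\<phi> 0 = \<one>\<^bsub>G\<^esub>"
proof -
  have "\<phi> 0 \<in> carrier G"
    using assms(2) top_group_iso_onto_range[OF assms(3)] by blast
  moreover have "\<phi> 0 \<otimes>\<^bsub>G\<^esub> \<phi> 0 = \<phi> 0"
    using assms(3) unfolding top_group_iso_onto_def by (metis add_0)
  ultimately show ?thesis
    using group.l_cancel_one[OF assms(1)] by metis
qed

lemma top_group_iso_onto_continuous_map:
  "top_group_iso_onto G X \<phi> C \<Longrightarrow> continuous_map euclidean (subtopology X C) \<phi>"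
  unfolding top_group_iso_onto_def by (blast intro: homeomorphic_imp_continuous_map)

lemma top_group_iso_onto_open_preimage:
  assumes "top_group_iso_onto G X \<phi> C" "openin X K"
  shows "open (\<phi> -` K)"
  using openin_continuous_map_preimage[OF continuous_map_into_fulltopology
      [OF top_group_iso_onto_continuous_map[OF assms(1)]] assms(2)]
  by (simp add: vimage_def)

lemma top_group_iso_onto_compact_image:
  assumes "top_group_iso_onto G X \<phi> C" "compact Z"
  shows "compactin X (\<phi> ` Z)" "\<phi> ` Z \<subseteq> C"
  using image_compactin[OF _ continuous_map_into_fulltopology
      [OF top_group_iso_onto_continuous_map[OF assms(1)]], of Z] assms
    top_group_iso_onto_range[OF assms(1)]
  by auto

lemma right_invariant_factor_eq_one:
  fixes f :: "'g \<Rightarrow> 'a::idom"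
  assumes "right_invariant G K f" "g \<in> carrier G" "k \<in> K"
    and "f (g \<otimes>\<^bsub>G\<^esub> k) = f g * w" "f g \<noteq> 0"
  shows "w = 1"
proof -
  have "f g * w = f g * 1"
    using assms(1-4) unfolding right_invariant_def by simp
  then show ?thesis
    using assms(5) by simp
qed

lemma open_compact_subgroup_preimage:
  assumes G: "group G" and D: "D \<subseteq> carrier G" "top_group_iso_onto G X \<phi> D"
    and K: "open_compact_subgroup G X K"
  shows "open (\<phi> -` K)" "0 \<in> \<phi> -` K"
proof -
  have K': "subgroup K G" "openin X K"
    using K unfolding open_compact_subgroup_def by blast+
  show "open (\<phi> -` K)"
    by (rule top_group_iso_onto_open_preimage[OF D(2) K'(2)])
  show "0 \<in> \<phi> -` K"
    using top_group_iso_onto_zero[OF G D] subgroup.one_closed[OF K'(1)] by simp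
qed

lemma support_compact:
  fixes G :: "('g, 'b) monoid_scheme" and \<psi> :: "'f::{field,topological_space} \<Rightarrow> complex"
    and \<phi>C \<phi>D :: "'f^'n::finite \<Rightarrow> 'g" and B :: "'f^'n \<Rightarrow> 'f^'n \<Rightarrow> 'f"
  assumes F: "p_adic_field TYPE('f)" and \<psi>: "nontrivial_additive_character \<psi>"
    and G: "group G"
    and C: "C \<subseteq> carrier G" "top_group_iso_onto G X \<phi>C C"
    and D: "D \<subseteq> carrier G" "top_group_iso_onto G X \<phi>D D"
    and B: "F_bilinear B" "nondegenerate_pairing B"
    and K: "open_compact_subgroup G X K" "right_invariant G K f"
    and f: "\<And>x y. f (\<phi>C x \<otimes>\<^bsub>G\<^esub> \<phi>D y) = f (\<phi>C x) * chi (\<phi>D y) * \<psi> (B x y)"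
  shows "\<exists>S. S \<subseteq> C \<and> compactin X S \<and> {c \<in> C. f c \<noteq> 0} \<subseteq> S"
proof (cases "{c \<in> C. f c \<noteq> 0} = {}")
  case False
  then obtain x0 where x0: "f (\<phi>C x0) \<noteq> 0"
    using top_group_iso_onto_range[OF C(2)] by (metis (mono_tags, lifting) empty_Collect_eq rangeE)
  define M where "M = (\<chi> i j. B (axis i 1) (axis j 1))"
  have B_eq: "B = pairing_of_matrix M"
    unfolding M_def using B(1) by (rule F_bilinear_eq_pairing_of_matrix)
  have det_M: "det M' \<noteq> 0" if "M' \<in> {M}" for M'
    using B(2) that unfolding B_eq by (simp add: nondegenerate_pairing_of_matrix_imp_det_nonzero)
  obtain Z where Z: "compact Z"
    "\<And>M' z. M' \<in> {M} \<Longrightarrow> (\<forall>y\<in>\<phi>D -` K. \<psi> (pairing_of_matrix M' z y) = 1) \<Longrightarrow> z \<in> Z"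
    using pairing_annihilator_bounded[OF F \<psi> open_compact_subgroup_preimage[OF G D K(1)]
        compact_sing[of M] det_M] by blast
  have on_support: "chi (\<phi>D y) * \<psi> (B x y) = 1" if "f (\<phi>C x) \<noteq> 0" "\<phi>D y \<in> K" for x y
    using right_invariant_factor_eq_one[OF K(2) _ _ _ that(1)] C top_group_iso_onto_range that(2)
      f[of x y] by (metis mult.assoc rangeI subsetD)
  have "x - x0 \<in> Z" if "f (\<phi>C x) \<noteq> 0" for x
    using Z(2)[OF singletonI] additive_character_bilinear_diff_eq_one[OF \<psi> B(1)]
      on_support[OF that] on_support[OF x0] unfolding B_eq by blast
  then have "{c \<in> C. f c \<noteq> 0} \<subseteq> \<phi>C ` ((\<lambda>z. x0 + z) ` Z)"
    using top_group_iso_onto_range[OF C(2)] by (force simp: image_image)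
  moreover have "compact ((\<lambda>z. x0 + z) ` Z)"
    using Z(1) by (rule compact_continuous_image[OF p_adic_field_continuous_on_translation[OF F]])
  ultimately show ?thesis
    using top_group_iso_onto_compact_image[OF C(2)] by blast
qed blast

lemma support_uniformly_compact:
  fixes G :: "('g, 'b) monoid_scheme" and \<psi> :: "'f::{field,topological_space} \<Rightarrow> complex"
    and \<phi>C \<phi>D :: "'f^'n::finite \<Rightarrow> 'g" and \<Omega> :: "('f^'n^'n) set"
  assumes F: "p_adic_field TYPE('f)" and \<psi>: "nontrivial_additive_character \<psi>"
    and G: "group G"
    and C: "C \<subseteq> carrier G" "top_group_iso_onto G X \<phi>C C"
    and D: "D \<subseteq> carrier G" "top_group_iso_onto G X \<phi>D D"
    and K: "open_compact_subgroup G X K"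
    and \<Omega>: "compact \<Omega>" "\<forall>M\<in>\<Omega>. nondegenerate_pairing (pairing_of_matrix M)"
    and U: "subgroup U G" "openin (subtopology X D) U"
  shows "\<exists>S. S \<subseteq> C \<and> compactin X S \<and>
    (\<forall>M\<in>\<Omega>. \<forall>chi (f :: 'g \<Rightarrow> complex). (\<forall>u\<in>U. chi u = 1) \<longrightarrow> right_invariant G K f \<longrightarrow>
       (\<forall>x y. f (\<phi>C x \<otimes>\<^bsub>G\<^esub> \<phi>D y) = f (\<phi>C x) * chi (\<phi>D y) * \<psi> (pairing_of_matrix M x y)) \<longrightarrow>
       {c \<in> C. f c \<noteq> 0} \<subseteq> S)"
proof -
  have "open (\<phi>D -` U)"
    using openin_continuous_map_preimage[OF top_group_iso_onto_continuous_map[OF D(2)] U(2)]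
    by (simp add: vimage_def)
  then have L: "open (\<phi>D -` K \<inter> \<phi>D -` U)" "0 \<in> \<phi>D -` K \<inter> \<phi>D -` U"
    using open_compact_subgroup_preimage[OF G D K] top_group_iso_onto_zero[OF G D]
      subgroup.one_closed[OF U(1)] by auto
  have "det M \<noteq> 0" if "M \<in> \<Omega>" for M
    using \<Omega>(2) that by (simp add: nondegenerate_pairing_of_matrix_imp_det_nonzero)
  then obtain Z where Z: "compact Z" "\<And>M z. M \<in> \<Omega> \<Longrightarrow>
      (\<forall>y\<in>\<phi>D -` K \<inter> \<phi>D -` U. \<psi> (pairing_of_matrix M z y) = 1) \<Longrightarrow> z \<in> Z"
    using pairing_annihilator_bounded[OF F \<psi> L \<Omega>(1)] by blast
  show ?thesis
  proof (intro exI[of _ "\<phi>C ` Z"] conjI ballI allI impI)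
    show "\<phi>C ` Z \<subseteq> C" "compactin X (\<phi>C ` Z)"
      using top_group_iso_onto_compact_image[OF C(2) Z(1)] by auto
    fix M chi and f :: "'g \<Rightarrow> complex"
    assume M: "M \<in> \<Omega>" and chi: "\<forall>u\<in>U. chi u = 1" and f_inv: "right_invariant G K f"
      and f: "\<forall>x y. f (\<phi>C x \<otimes>\<^bsub>G\<^esub> \<phi>D y) = f (\<phi>C x) * chi (\<phi>D y) * \<psi> (pairing_of_matrix M x y)"
    have "x \<in> Z" if "f (\<phi>C x) \<noteq> 0" for x
    proof (rule Z(2)[OF M], rule ballI)
      fix y assume "y \<in> \<phi>D -` K \<inter> \<phi>D -` U"
      then show "\<psi> (pairing_of_matrix M x y) = 1"
        using right_invariant_factor_eq_one[OF f_inv _ _ _ that] C top_group_iso_onto_range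
          f chi by (metis IntD1 IntD2 mult_1_right rangeI subsetD vimageE)
    qed
    then show "{c \<in> C. f c \<noteq> 0} \<subseteq> \<phi>C ` Z"
      using top_group_iso_onto_range[OF C(2)] by auto
  qed
qed

theorem mainTheorem6:
  fixes G :: "('g, 'b) monoid_scheme" and X :: "'g topology"
    and \<psi> :: "'f::{field,topological_space} \<Rightarrow> complex"
    and C D :: "'g set"
    and \<phi>C \<phi>D :: "'f^'m::finite \<Rightarrow> 'g"
  assumes F: "p_adic_field TYPE('f)"
    and psi: "nontrivial_additive_character \<psi>"
    and G0: "lctd_group G X"
    and C: "subgroup C G" "closedin X C" "top_group_iso_onto G X \<phi>C C"
    and D: "subgroup D G" "closedin X D" "top_group_iso_onto G X \<phi>D D"
  shows
    "(\<forall>(B :: 'f^'m \<Rightarrow> 'f^'m \<Rightarrow> 'f) chi (f :: 'g \<Rightarrow> complex).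
        F_bilinear B \<longrightarrow> nondegenerate_pairing B \<longrightarrow>
        continuous_character G X D chi \<longrightarrow>
        (\<exists>K. open_compact_subgroup G X K \<and> right_invariant G K f) \<longrightarrow>
        (\<forall>x y. f (\<phi>C x \<otimes>\<^bsub>G\<^esub> \<phi>D y) = f (\<phi>C x) * chi (\<phi>D y) * \<psi> (B x y)) \<longrightarrow>
        (\<exists>S. S \<subseteq> C \<and> compactin X S \<and> {c \<in> C. f c \<noteq> 0} \<subseteq> S))
     \<and>
     (\<forall>K0 (\<Omega> :: ('f^'m^'m) set) U.
        open_compact_subgroup G X K0 \<longrightarrow>
        compact \<Omega> \<longrightarrow> (\<forall>M\<in>\<Omega>. nondegenerate_pairing (pairing_of_matrix M)) \<longrightarrow>
        U \<subseteq> D \<longrightarrow> subgroup U G \<longrightarrow> openin (subtopology X D) U \<longrightarrow> compactin X U \<longrightarrow>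
        (\<exists>S. S \<subseteq> C \<and> compactin X S \<and>
          (\<forall>M\<in>\<Omega>. \<forall>chi (f :: 'g \<Rightarrow> complex).
             continuous_character G X D chi \<longrightarrow> (\<forall>u\<in>U. chi u = 1) \<longrightarrow>
             right_invariant G K0 f \<longrightarrow>
             (\<forall>x y. f (\<phi>C x \<otimes>\<^bsub>G\<^esub> \<phi>D y) = f (\<phi>C x) * chi (\<phi>D y) * \<psi> (pairing_of_matrix M x y)) \<longrightarrow>
             {c \<in> C. f c \<noteq> 0} \<subseteq> S)))"
proof -
  have G: "group G"
    using G0 by (simp add: lctd_group_def)
  have C_carrier: "C \<subseteq> carrier G" and D_carrier: "D \<subseteq> carrier G"
    using C(1) D(1) by (simp_all add: subgroup.subset)
  note part1 = support_compact[OF F psi G C_carrier C(3) D_carrier D(3)]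
  note part2 = support_uniformly_compact[OF F psi G C_carrier C(3) D_carrier D(3)]
  show ?thesis
  proof (intro conjI allI impI, goal_cases)
    case (1 B chi f)
    then obtain K where K: "open_compact_subgroup G X K" "right_invariant G K f"
      by blast
    show ?case
      by (rule part1[OF 1(1,2) K 1(5)[rule_format]])
  next
    case (2 K0 \<Omega> U)
    from part2[OF 2(1-3) 2(5,6)] show ?case
      by (elim exE conjE, intro exI conjI) (assumption, assumption, blast)
  qed
qed

end
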